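(* Let $\mathcal{H}$ be a real Hilbert space, $f:\mathcal{H}\to\mathbb{R}$ $\mu$-strongly convex and $L$-smooth with $0<\mu<L<\infty$, $g:\mathcal{H}\to\mathbb{R}\cup\{+\infty\}$ convex, proper and lower semicontinuous, $q=\mu/L$, and $x^\star$ the unique minimizer of $f+g$. Let the Prox-ITEM iterates $z^k$, scalars $A_k$ and the quantities $\mathcal{V}_k$ be as defined in the context. Then for every $k\in\mathbb{N}_0$, $$(L+\mu A_{k+1})\|z^{k+1}-x^\star\|^2\le\mathcal{V}_k.$$
   Context: $\operatorname{Prox}^{\gamma}_g(x)=\operatorname{argmin}_z\big(g(z)+\frac{1}{2\gamma}\|x-z\|^2\big)$. Prox-ITEM from $x^0\in\mathcal{H}$: $A_0=0$, $z^0=x^0$, and for $k\ge0$: $A_{k+1}=\frac{(1+q)A_k+2(1+\sqrt{(1+A_k)(1+qA_k)})}{(1-q)^2}$, $\beta_k=\frac{A_k}{(1-q)A_{k+1}}$, $\delta_k=\sqrt{\frac{A_{k+1}}{1+qA_{k+1}}}$, $y^k=(1-\beta_k)z^k+\beta_kx^k$, $\bar z^{k+1}=(1-q\delta_k)z^k+q\delta_ky^k-\frac{\delta_k}{L}\nabla f(y^k)$, $z^{k+1}=\operatorname{Prox}^{\delta_k/L}_g(\bar z^{k+1})$, $x^{k+1}=y^k-\frac1L\nabla f(y^k)-\frac1{\delta_k}(\bar z^{k+1}-z^{k+1})$. Define $\mathcal{I}_f(x,y)=f(x)-f(y)-\langle\nabla f(y),x-y\rangle-\frac{\mu}{2}\|x-y\|^2-\frac{1}{2(L-\mu)}\|\nabla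 f(x)-\nabla f(y)-\mu(x-y)\|^2$ and $\mathcal{I}_g(x,y,s)=g(x)-g(y)-\langle s,x-y\rangle$. Let $s_g^k=L\delta_{k-1}^{-1}(\bar z^k-z^k)$ for $k\ge1$, $s_g^\star=-\nabla f(x^\star)$, and $\sigma_k=\sqrt{(1+A_k)(1+qA_k)}$. For $k\in\mathbb{N}_0$, $$\mathcal{V}_k=(1-q)A_k\mathcal{I}_f(y^{k-1},x^\star)+qA_k\mathcal{I}_g(x^\star,z^k,s_g^k)+(qA_k+1-\sigma_k)\mathcal{I}_g(z^k,x^\star,s_g^\star)+\frac{A_k}{2L}\|s_g^k-s_g^\star\|^2+(L+\mu A_k)\|z^k-x^\star\|^2,$$ with the conventions $y^{-1}=y^0$, $s_g^0=s_g^1$, $0\cdot(\pm\infty)=0$. *)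

theory Defs
  imports "HOL-Analysis.Analysis" "HOL-Library.Extended_Real"
begin

definition strongly_convex :: "real \<Rightarrow> ('a::real_inner \<Rightarrow> real) \<Rightarrow> bool" where
  "strongly_convex \<mu> f \<longleftrightarrow> convex_on UNIV (\<lambda>x. f x - \<mu> / 2 * (norm x)\<^sup>2)"

definition L_smooth :: "real \<Rightarrow> ('a::real_inner \<Rightarrow> real) \<Rightarrow> ('a \<Rightarrow> 'a) \<Rightarrow> bool" where
  "L_smooth L f gf \<longleftrightarrow> (\<forall>x. (f has_derivative (\<lambda>h. gf x \<bullet> h)) (at x))
      \<and> (\<forall>x y. norm (gf x - gf y) \<le> L * norm (x - y))"

text \<open>Extended-valued functions g : H -> R union {+inf}, encoded as ereal-valued functions
  never taking the value -inf.\<close>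
definition proper_fun :: "('a \<Rightarrow> ereal) \<Rightarrow> bool" where
  "proper_fun g \<longleftrightarrow> (\<forall>x. g x \<noteq> -\<infinity>) \<and> (\<exists>x. g x \<noteq> \<infinity>)"

definition convex_fun :: "('a::real_vector \<Rightarrow> ereal) \<Rightarrow> bool" where
  "convex_fun g \<longleftrightarrow> (\<forall>x y t. 0 \<le> t \<and> t \<le> 1 \<longrightarrow>
      g ((1 - t) *\<^sub>R x + t *\<^sub>R y) \<le> ereal (1 - t) * g x + ereal t * g y)"

definition lsc_fun :: "('a::topological_space \<Rightarrow> ereal) \<Rightarrow> bool" where
  "lsc_fun g \<longleftrightarrow> (\<forall>c. closed {x. g x \<le> c})"

definition is_prox :: "('a::real_normed_vector \<Rightarrow> ereal) \<Rightarrow> real \<Rightarrow> 'a \<Rightarrow> 'a \<Rightarrow> bool" where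
  "is_prox g \<gamma> x z \<longleftrightarrow>
     (\<forall>w. g z + ereal ((norm (x - z))\<^sup>2 / (2 * \<gamma>)) \<le> g w + ereal ((norm (x - w))\<^sup>2 / (2 * \<gamma>)))"

fun Aseq :: "real \<Rightarrow> nat \<Rightarrow> real" where
  "Aseq q 0 = 0"
| "Aseq q (Suc k) = ((1 + q) * Aseq q k + 2 * (1 + sqrt ((1 + Aseq q k) * (1 + q * Aseq q k)))) / (1 - q)\<^sup>2"

definition beta_seq :: "real \<Rightarrow> nat \<Rightarrow> real" where
  "beta_seq q k = Aseq q k / ((1 - q) * Aseq q (Suc k))"

definition delta_seq :: "real \<Rightarrow> nat \<Rightarrow> real" where
  "delta_seq q k = sqrt (Aseq q (Suc k) / (1 + q * Aseq q (Suc k)))"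

definition sigma_seq :: "real \<Rightarrow> nat \<Rightarrow> real" where
  "sigma_seq q k = sqrt ((1 + Aseq q k) * (1 + q * Aseq q k))"

definition I_f :: "real \<Rightarrow> real \<Rightarrow> ('a::real_inner \<Rightarrow> real) \<Rightarrow> ('a \<Rightarrow> 'a) \<Rightarrow> 'a \<Rightarrow> 'a \<Rightarrow> real" where
  "I_f \<mu> L f gf x y = f x - f y - gf y \<bullet> (x - y) - \<mu> / 2 * (norm (x - y))\<^sup>2
     - 1 / (2 * (L - \<mu>)) * (norm (gf x - gf y - \<mu> *\<^sub>R (x - y)))\<^sup>2"

definition I_g :: "('a::real_inner \<Rightarrow> ereal) \<Rightarrow> 'a \<Rightarrow> 'a \<Rightarrow> 'a \<Rightarrow> ereal" where
  "I_g g x y s = g x - g y - ereal (s \<bullet> (x - y))"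

text \<open>s_g^k = L / delta_{k-1} (zbar^k - z^k) for k >= 1, with the convention s_g^0 = s_g^1.\<close>
definition s_g :: "real \<Rightarrow> real \<Rightarrow> (nat \<Rightarrow> 'a::real_vector) \<Rightarrow> (nat \<Rightarrow> 'a) \<Rightarrow> nat \<Rightarrow> 'a" where
  "s_g q L zbar z k = (let j = max k 1 in (L / delta_seq q (j - 1)) *\<^sub>R (zbar j - z j))"

text \<open>Lyapunov quantity V_k (ereal-valued; Isabelle's ereal arithmetic has 0 * (+-inf) = 0).
  The convention y^{-1} = y^0 is realised by natural-number subtraction k - 1.\<close>
definition V_seq :: "real \<Rightarrow> real \<Rightarrow> ('a::real_inner \<Rightarrow> real) \<Rightarrow> ('a \<Rightarrow> 'a) \<Rightarrow> ('a \<Rightarrow> ereal)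
    \<Rightarrow> (nat \<Rightarrow> 'a) \<Rightarrow> (nat \<Rightarrow> 'a) \<Rightarrow> (nat \<Rightarrow> 'a) \<Rightarrow> 'a \<Rightarrow> nat \<Rightarrow> ereal" where
  "V_seq \<mu> L f gf g y z zbar xs k =
     (let q = \<mu> / L; A = Aseq q k; sk = s_g q L zbar z k; ss = - gf xs in
       ereal ((1 - q) * A * I_f \<mu> L f gf (y (k - 1)) xs)
       + ereal (q * A) * I_g g xs (z k) sk
       + ereal (q * A + 1 - sigma_seq q k) * I_g g (z k) xs ss
       + ereal (A / (2 * L) * (norm (sk - ss))\<^sup>2)
       + ereal ((L + \<mu> * A) * (norm (z k - xs))\<^sup>2))"

end

theory Submission
  imports Defs
begin

(*
  Write s_k for s_g^k and ss = -grad f xs.  The bound is a certificate: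
  V_k - (L + mu A_{k+1}) |z^{k+1} - xs|^2 equals
    (1-q)(A_{k+1} - A_k) I_f(xs, y^k) + (1-q) A_k I_f(y^{k-1}, y^k) + (1-q) A_{k+1} I_f(y^k, xs)
    + (sigma_k - 1) I_g(z^{k+1}, z^k, s_k) + (2 A_{k+1} / delta_k) I_g(xs, z^{k+1}, s_{k+1})
    + ((2 A_{k+1} - A_k) / delta_k) I_g(z^{k+1}, xs, ss)
    + A_k/(2L) |s_k - s_{k+1}|^2 + (2 A_{k+1} - A_k)/(2L) |s_{k+1} - ss|^2,
  and every summand is nonnegative: I_f >= 0 is the interpolation inequality for mu-strongly
  convex L-smooth f, and the I_g terms are subgradient inequalities, since s_{k+1} is a
  subgradient of g at the prox point z^{k+1} and ss one at the minimiser xs.  Checking the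
  identity uses only the recurrences tying A_k, A_{k+1}, sigma_k, delta_k and beta_k together,
  all of which follow from the closed form delta_k = (1 + sigma_k) / (1 + q + q A_k).
*)

section \<open>Smooth strongly convex functions\<close>

lemma has_real_derivative_along_line:
  assumes "\<And>x. (f has_derivative (\<lambda>h. gf x \<bullet> h)) (at x)"
  shows "((\<lambda>t. f (x + t *\<^sub>R d)) has_real_derivative (gf (x + t *\<^sub>R d) \<bullet> d)) (at t within S)"
proof -
  have "((\<lambda>t. x + t *\<^sub>R d) has_derivative (\<lambda>s. s *\<^sub>R d)) (at t within S)"
    by (auto intro!: derivative_eq_intros)
  from has_derivative_compose[OF this assms]
  show ?thesis
    by (simp add: has_field_derivative_def o_def mult_commute_abs)
qed

lemma L_smooth_upper_bound:
  fixes f :: "'a::real_inner \<Rightarrow> real"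
  assumes "L_smooth L f gf"
  shows "f y \<le> f x + gf x \<bullet> (y - x) + L / 2 * (norm (y - x))\<^sup>2"
proof -
  define d where "d = y - x"
  define \<phi> where "\<phi> t = f (x + t *\<^sub>R d) - t * (gf x \<bullet> d) - L / 2 * t\<^sup>2 * (norm d)\<^sup>2" for t
  have der: "\<And>x. (f has_derivative (\<lambda>h. gf x \<bullet> h)) (at x)"
    and lip: "\<And>a b. norm (gf a - gf b) \<le> L * norm (a - b)"
    using assms unfolding L_smooth_def by auto
  have "\<phi> 1 \<le> \<phi> 0"
  proof (rule DERIV_nonpos_imp_nonincreasing[of 0 1 \<phi>])
    fix t :: real
    assume t: "0 \<le> t" "t \<le> 1"
    have "(\<phi> has_real_derivative (gf (x + t *\<^sub>R d) \<bullet> d - gf x \<bullet> d - L / 2 * (2 * t) * (norm d)\<^sup>2)) (at t)"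
      unfolding \<phi>_def by (auto intro!: derivative_eq_intros has_real_derivative_along_line[OF der])
    moreover have "gf (x + t *\<^sub>R d) \<bullet> d - gf x \<bullet> d \<le> L / 2 * (2 * t) * (norm d)\<^sup>2"
    proof -
      have "gf (x + t *\<^sub>R d) \<bullet> d - gf x \<bullet> d \<le> norm (gf (x + t *\<^sub>R d) - gf x) * norm d"
        by (metis inner_diff_left norm_cauchy_schwarz)
      also have "\<dots> \<le> L * norm (t *\<^sub>R d) * norm d"
        using lip[of "x + t *\<^sub>R d" x] by (simp add: mult_right_mono)
      finally show ?thesis using t by (simp add: power2_eq_square)
    qed
    ultimately show "\<exists>y. (\<phi> has_real_derivative y) (at t) \<and> y \<le> 0" by force
  qed simp
  then show ?thesis unfolding \<phi>_def d_def by simp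
qed

lemma convex_on_gradient_inequality:
  fixes h :: "'a::real_inner \<Rightarrow> real"
  assumes cvx: "convex_on UNIV h" and der: "\<And>x. (h has_derivative (\<lambda>v. gh x \<bullet> v)) (at x)"
  shows "h x + gh x \<bullet> (y - x) \<le> h y"
proof -
  define d where "d = y - x"
  define \<psi> where "\<psi> t = h (x + t *\<^sub>R d)" for t
  have "convex_on UNIV \<psi>"
  proof (rule convex_onI)
    fix t a b :: real
    assume "0 < t" "t < 1"
    moreover have "x + ((1 - t) *\<^sub>R a + t *\<^sub>R b) *\<^sub>R d = (1 - t) *\<^sub>R (x + a *\<^sub>R d) + t *\<^sub>R (x + b *\<^sub>R d)"
      by (simp add: algebra_simps)
    ultimately show "\<psi> ((1 - t) *\<^sub>R a + t *\<^sub>R b) \<le> (1 - t) * \<psi> a + t * \<psi> b"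
      unfolding \<psi>_def using convex_onD[OF cvx, of t] by simp
  qed simp
  moreover have "(\<psi> has_real_derivative (gh x \<bullet> d)) (at 0 within UNIV)"
    using has_real_derivative_along_line[OF der, of x d 0] unfolding \<psi>_def by simp
  ultimately have "\<psi> 1 - \<psi> 0 \<ge> gh x \<bullet> d * (1 - 0)"
    by (intro convex_on_imp_above_tangent) auto
  then show ?thesis unfolding \<psi>_def d_def by simp
qed

lemma strongly_convex_lower_bound:
  fixes f :: "'a::real_inner \<Rightarrow> real"
  assumes sc: "strongly_convex \<mu> f" and der: "\<And>x. (f has_derivative (\<lambda>h. gf x \<bullet> h)) (at x)"
  shows "f x + gf x \<bullet> (y - x) + \<mu> / 2 * (norm (y - x))\<^sup>2 \<le> f y"
proof -
  have "((\<lambda>w. f w - \<mu> / 2 * (norm w)\<^sup>2) has_derivative (\<lambda>v. (gf w - \<mu> *\<^sub>R w) \<bullet> v)) (at w)" for w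
    unfolding power2_norm_eq_inner
    by (auto intro!: derivative_eq_intros der simp: fun_eq_iff inner_diff_left inner_diff_right inner_commute)
  from convex_on_gradient_inequality[OF sc[unfolded strongly_convex_def] this]
  show ?thesis unfolding power2_norm_eq_inner
    by (simp add: inner_commute algebra_simps)
qed

lemma interpolation_inequality:
  fixes h :: "'a::real_inner \<Rightarrow> real"
  assumes M: "0 < M"
    and lower: "\<And>v w. h v + gh v \<bullet> (w - v) \<le> h w"
    and upper: "\<And>v w. h w \<le> h v + gh v \<bullet> (w - v) + M / 2 * (norm (w - v))\<^sup>2"
  shows "h y + gh y \<bullet> (x - y) + 1 / (2 * M) * (norm (gh x - gh y))\<^sup>2 \<le> h x"
proof -
  define G where "G = gh x - gh y"
  define w where "w = x - (1 / M) *\<^sub>R G"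
  have "h y + gh y \<bullet> (w - y) \<le> h x + gh x \<bullet> (w - x) + M / 2 * (norm (w - x))\<^sup>2"
    using lower[of y w] upper[of w x] by linarith
  moreover have "M / 2 * (norm (w - x))\<^sup>2 = 1 / (2 * M) * (G \<bullet> G)"
    unfolding w_def power2_norm_eq_inner using M by (simp add: power2_eq_square)
  ultimately show ?thesis
    unfolding w_def G_def power2_norm_eq_inner using M
    by (simp add: algebra_simps)
qed

lemma I_f_nonneg:
  fixes f :: "'a::real_inner \<Rightarrow> real"
  assumes sc: "strongly_convex \<mu> f" and sm: "L_smooth L f gf" and "\<mu> < L"
  shows "0 \<le> I_f \<mu> L f gf x y"
proof -
  define h where "h w = f w - \<mu> / 2 * (norm w)\<^sup>2" for w
  define gh where "gh w = gf w - \<mu> *\<^sub>R w" for w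
  have gap: "h w - h v - gh v \<bullet> (w - v) = f w - f v - gf v \<bullet> (w - v) - \<mu> / 2 * (norm (w - v))\<^sup>2" for v w
    unfolding h_def gh_def power2_norm_eq_inner
    by (simp add: inner_commute algebra_simps)
  have der: "\<And>x. (f has_derivative (\<lambda>h. gf x \<bullet> h)) (at x)"
    using sm unfolding L_smooth_def by blast
  have "h y + gh y \<bullet> (x - y) + 1 / (2 * (L - \<mu>)) * (norm (gh x - gh y))\<^sup>2 \<le> h x"
  proof (rule interpolation_inequality)
    show "h v + gh v \<bullet> (w - v) \<le> h w" for v w
      using strongly_convex_lower_bound[OF sc der, of v w] gap[of w v] by linarith
    show "h w \<le> h v + gh v \<bullet> (w - v) + (L - \<mu>) / 2 * (norm (w - v))\<^sup>2" for v w
      using L_smooth_upper_bound[OF sm, of w v] gap[of w v] by (simp add: left_diff_distrib diff_divide_distrib)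
  qed (use \<open>\<mu> < L\<close> in simp)
  moreover have "gh x - gh y = gf x - gf y - \<mu> *\<^sub>R (x - y)"
    unfolding gh_def by (simp add: algebra_simps)
  ultimately show ?thesis
    using gap[of x y] unfolding I_f_def by simp
qed

section \<open>Subgradients of extended-real functions\<close>

definition is_subgradient :: "('a::real_inner \<Rightarrow> ereal) \<Rightarrow> 'a \<Rightarrow> 'a \<Rightarrow> bool" where
  "is_subgradient g x s \<longleftrightarrow> \<bar>g x\<bar> \<noteq> \<infinity> \<and> (\<forall>w. g x + ereal (s \<bullet> (w - x)) \<le> g w)"

definition linearization_gap :: "('a::real_inner \<Rightarrow> real) \<Rightarrow> 'a \<Rightarrow> 'a \<Rightarrow> 'a \<Rightarrow> real" where
  "linearization_gap G x y s = G x - G y - s \<bullet> (x - y)"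

lemma I_g_eq_linearization_gap:
  assumes "\<bar>g x\<bar> \<noteq> \<infinity>" "\<bar>g y\<bar> \<noteq> \<infinity>"
  shows "I_g g x y s = ereal (linearization_gap (\<lambda>w. real_of_ereal (g w)) x y s)"
  using assms unfolding I_g_def linearization_gap_def
  by (cases "g x"; cases "g y") auto

lemma linearization_gap_nonneg:
  assumes "is_subgradient g y s" "\<bar>g x\<bar> \<noteq> \<infinity>"
  shows "0 \<le> linearization_gap (\<lambda>w. real_of_ereal (g w)) x y s"
proof -
  obtain gy where gy: "g y = ereal gy" and "g y + ereal (s \<bullet> (x - y)) \<le> g x"
    using assms(1) unfolding is_subgradient_def by (cases "g y") auto
  moreover obtain gx where "g x = ereal gx"
    using assms(2) by (cases "g x") auto
  ultimately show ?thesis unfolding linearization_gap_def by simp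
qed

lemma is_subgradient_of_minimizer:
  fixes g :: "'a::real_inner \<Rightarrow> ereal" and \<phi> :: "'a \<Rightarrow> real"
  assumes cvx: "convex_fun g" and proper: "proper_fun g"
    and min: "\<And>w. g z + ereal (\<phi> z) \<le> g w + ereal (\<phi> w)"
    and model: "\<And>w t. 0 < t \<Longrightarrow> t \<le> 1 \<Longrightarrow>
      \<phi> ((1 - t) *\<^sub>R z + t *\<^sub>R w) \<le> \<phi> z + t * (d \<bullet> (w - z)) + t\<^sup>2 * K w"
  shows "is_subgradient g z (- d)"
proof -
  obtain w0 where "g w0 \<noteq> \<infinity>" and no_minf: "\<And>w. g w \<noteq> -\<infinity>"
    using proper unfolding proper_fun_def by blast
  with min[of w0] obtain gz where gz: "g z = ereal gz"
    by (cases "g z"; cases "g w0") auto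
  have "g z + ereal (- d \<bullet> (w - z)) \<le> g w" for w
  proof (cases "g w")
    case (real gw)
    have slope: "gz - d \<bullet> (w - z) - gw \<le> t * K w" if t: "0 < t" "t \<le> 1" for t
    proof -
      define wt where "wt = (1 - t) *\<^sub>R z + t *\<^sub>R w"
      have "g wt \<le> ereal (1 - t) * g z + ereal t * g w"
        using cvx t unfolding convex_fun_def wt_def by simp
      then have cvx_t: "g wt \<le> ereal ((1 - t) * gz + t * gw)"
        using gz real by simp
      have "g z + ereal (\<phi> z) \<le> g wt + ereal (\<phi> wt)" by (rule min)
      also have "\<dots> \<le> ereal ((1 - t) * gz + t * gw) + ereal (\<phi> wt)"
        using cvx_t by (rule add_right_mono)
      finally have "gz + \<phi> z \<le> (1 - t) * gz + t * gw + \<phi> wt"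
        using gz by simp
      with model[OF t, of w] have "t * (gz - d \<bullet> (w - z) - gw) \<le> t * (t * K w)"
        unfolding wt_def by (simp add: algebra_simps power2_eq_square)
      with t show ?thesis by simp
    qed
    have "((\<lambda>t. t * K w) \<longlongrightarrow> 0 * K w) (at_right 0)"
      by (intro tendsto_intros)
    moreover have "eventually (\<lambda>t. gz - d \<bullet> (w - z) - gw \<le> t * K w) (at_right 0)"
      by (rule eventually_at_rightI[where b = 1]) (auto intro: slope)
    ultimately have "gz - d \<bullet> (w - z) - gw \<le> 0 * K w"
      by (rule tendsto_lowerbound) simp
    then show ?thesis using gz real by simp
  qed (use no_minf in auto)
  with gz show ?thesis unfolding is_subgradient_def by simp
qed

lemma is_subgradient_prox:
  assumes "convex_fun g" "proper_fun g" "0 < \<gamma>" "is_prox g \<gamma> xb z"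
  shows "is_subgradient g z ((1 / \<gamma>) *\<^sub>R (xb - z))"
proof -
  have "is_subgradient g z (- (- (1 / \<gamma>) *\<^sub>R (xb - z)))"
  proof (rule is_subgradient_of_minimizer[where \<phi> = "\<lambda>w. (norm (xb - w))\<^sup>2 / (2 * \<gamma>)"
        and K = "\<lambda>w. (norm (w - z))\<^sup>2 / (2 * \<gamma>)"])
    fix w :: 'a and t :: real
    have "xb - ((1 - t) *\<^sub>R z + t *\<^sub>R w) = (xb - z) - t *\<^sub>R (w - z)"
      by (simp add: algebra_simps)
    then have expand: "(norm (xb - ((1 - t) *\<^sub>R z + t *\<^sub>R w)))\<^sup>2
        = (norm (xb - z))\<^sup>2 - 2 * t * ((xb - z) \<bullet> (w - z)) + t\<^sup>2 * (norm (w - z))\<^sup>2"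
      unfolding power2_norm_eq_inner
      by (simp add: inner_commute power2_eq_square algebra_simps)
    have "N / (2 * \<gamma>) = a / (2 * \<gamma>) + t * (- (1 / \<gamma>) * c) + t\<^sup>2 * (b / (2 * \<gamma>))"
      if "N = a - 2 * t * c + t\<^sup>2 * b" for N a b c :: real
      using that \<open>0 < \<gamma>\<close> by (simp add: field_simps)
    from this[OF expand]
    show "(norm (xb - ((1 - t) *\<^sub>R z + t *\<^sub>R w)))\<^sup>2 / (2 * \<gamma>) \<le> (norm (xb - z))\<^sup>2 / (2 * \<gamma>)
        + t * ((- (1 / \<gamma>) *\<^sub>R (xb - z)) \<bullet> (w - z)) + t\<^sup>2 * ((norm (w - z))\<^sup>2 / (2 * \<gamma>))"
      unfolding inner_scaleR_left by (rule eq_refl)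
  qed (use assms in \<open>auto simp: is_prox_def\<close>)
  then show ?thesis by simp
qed

lemma is_subgradient_at_minimizer_of_sum:
  fixes f :: "'a::real_inner \<Rightarrow> real"
  assumes "convex_fun g" "proper_fun g" and sm: "L_smooth L f gf"
    and min: "\<And>w. ereal (f xs) + g xs \<le> ereal (f w) + g w"
  shows "is_subgradient g xs (- gf xs)"
proof (rule is_subgradient_of_minimizer[where \<phi> = f and K = "\<lambda>w. L / 2 * (norm (w - xs))\<^sup>2"])
  fix w :: 'a and t :: real
  have "f (xs + t *\<^sub>R (w - xs)) \<le> f xs + t * (gf xs \<bullet> (w - xs)) + L / 2 * (t\<^sup>2 * (norm (w - xs))\<^sup>2)"
    using L_smooth_upper_bound[OF sm, of "xs + t *\<^sub>R (w - xs)" xs]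
    unfolding add_diff_cancel_left' inner_scaleR_right norm_scaleR power_mult_distrib power2_abs .
  moreover have "(1 - t) *\<^sub>R xs + t *\<^sub>R w = xs + t *\<^sub>R (w - xs)"
    by (simp add: algebra_simps)
  ultimately show "f ((1 - t) *\<^sub>R xs + t *\<^sub>R w) \<le> f xs + t * (gf xs \<bullet> (w - xs)) + t\<^sup>2 * (L / 2 * (norm (w - xs))\<^sup>2)"
    by (simp add: ac_simps)
qed (use assms in \<open>auto simp: add.commute\<close>)

section \<open>The step-size sequences\<close>

context
  fixes q :: real
  assumes q_nonneg: "0 \<le> q" and q_less_1: "q < 1"
begin

lemma Aseq_nonneg: "0 \<le> Aseq q k"
  by (induction k) (simp_all add: q_nonneg)

declare Aseq.simps(2) [simp del]

lemma sigma_seq_sq: "(sigma_seq q k)\<^sup>2 = (1 + Aseq q k) * (1 + q * Aseq q k)"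
  unfolding sigma_seq_def using Aseq_nonneg[of k] q_nonneg by simp

lemma sigma_seq_ge_1: "1 \<le> sigma_seq q k"
proof -
  have "1 * 1 \<le> (1 + Aseq q k) * (1 + q * Aseq q k)"
    using Aseq_nonneg[of k] q_nonneg by (intro mult_mono) auto
  then show ?thesis unfolding sigma_seq_def by simp
qed

lemma Aseq_Suc_eq: "(1 - q)\<^sup>2 * Aseq q (Suc k) = (1 + q) * Aseq q k + 2 + 2 * sigma_seq q k"
  using q_less_1 unfolding sigma_seq_def Aseq.simps(2) by simp

lemma Aseq_Suc_pos: "0 < Aseq q (Suc k)"
proof -
  have "0 \<le> (1 + q) * Aseq q k"
    using Aseq_nonneg[of k] q_nonneg by simp
  then have "0 < (1 + q) * Aseq q k + 2 + 2 * sigma_seq q k"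
    using sigma_seq_ge_1[of k] by linarith
  then have "0 < (1 - q)\<^sup>2 * Aseq q (Suc k)"
    using Aseq_Suc_eq[of k] by simp
  then show ?thesis by (simp add: zero_less_mult_iff)
qed

lemma Aseq_le_Suc: "Aseq q k \<le> Aseq q (Suc k)"
proof -
  have "q * q \<le> q"
    using q_nonneg q_less_1 by (simp add: mult_left_le_one_le)
  then have "(1 - q)\<^sup>2 \<le> 1 + q"
    using q_nonneg by (simp add: power2_eq_square algebra_simps)
  then have "(1 - q)\<^sup>2 * Aseq q k \<le> (1 + q) * Aseq q k"
    using Aseq_nonneg[of k] by (simp add: mult_right_mono)
  also have "\<dots> \<le> (1 - q)\<^sup>2 * Aseq q (Suc k)"
    using Aseq_Suc_eq[of k] sigma_seq_ge_1[of k] by simp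
  finally show ?thesis using q_less_1 by (simp add: mult_le_cancel_left_pos)
qed

lemma delta_seq_denominator_pos: "0 < 1 + q + q * Aseq q k"
proof -
  have "0 \<le> q * Aseq q k"
    using Aseq_nonneg[of k] q_nonneg by simp
  then show ?thesis using q_nonneg by linarith
qed

lemma delta_seq_eq: "delta_seq q k = (1 + sigma_seq q k) / (1 + q + q * Aseq q k)"
proof -
  define A S A' D where "A = Aseq q k" and "S = sigma_seq q k"
    and "A' = Aseq q (Suc k)" and "D = 1 + q + q * A"
  have D: "0 < D" unfolding D_def A_def by (rule delta_seq_denominator_pos)
  have "0 < 1 + q * A'" unfolding A'_def using Aseq_Suc_pos[of k] q_nonneg by (simp add: add_pos_nonneg)
  have N: "(1 - q)\<^sup>2 * A' = (1 + q) * A + 2 + 2 * S"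
    unfolding A_def S_def A'_def by (rule Aseq_Suc_eq)
  have "(1 - q)\<^sup>2 * (A' * D\<^sup>2) = ((1 + q) * A + 2 + 2 * S) * D\<^sup>2"
    unfolding N[symmetric] by simp
  also have "\<dots> = (1 + S)\<^sup>2 * ((1 - q)\<^sup>2 + q * ((1 + q) * A + 2 + 2 * S))"
    using sigma_seq_sq[of k] unfolding D_def A_def S_def by algebra
  also have "\<dots> = (1 - q)\<^sup>2 * ((1 + S)\<^sup>2 * (1 + q * A'))"
    unfolding N[symmetric] by (simp add: algebra_simps)
  finally have "A' * D\<^sup>2 = (1 + S)\<^sup>2 * (1 + q * A')"
    using q_less_1 by simp
  then have "A' / (1 + q * A') = ((1 + S) / D)\<^sup>2"
    using D \<open>0 < 1 + q * A'\<close> by (simp add: field_simps)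
  moreover have "0 \<le> 1 + S"
    using sigma_seq_ge_1[of k] unfolding S_def by simp
  ultimately show ?thesis using D
    unfolding delta_seq_def A'_def[symmetric] S_def[symmetric] D_def[symmetric] A_def[symmetric] by simp
qed

lemma delta_seq_pos: "0 < delta_seq q k"
  unfolding delta_seq_eq using sigma_seq_ge_1[of k] delta_seq_denominator_pos[of k] by simp

lemma delta_seq_sq: "(delta_seq q k)\<^sup>2 * (1 + q * Aseq q (Suc k)) = Aseq q (Suc k)"
proof -
  have "0 \<le> q * Aseq q (Suc k)"
    using Aseq_Suc_pos[of k] q_nonneg by simp
  then show ?thesis
    unfolding delta_seq_def using Aseq_Suc_pos[of k] by simp
qed

lemma delta_sigma_seq: "delta_seq q k * (sigma_seq q k - 1) = Aseq q k"
proof -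
  have "delta_seq q k * (sigma_seq q k - 1) = ((sigma_seq q k)\<^sup>2 - 1) / (1 + q + q * Aseq q k)"
    unfolding delta_seq_eq by (simp add: power2_eq_square algebra_simps)
  also have "\<dots> = Aseq q k"
    unfolding sigma_seq_sq using delta_seq_denominator_pos[of k] by (simp add: field_simps)
  finally show ?thesis .
qed

lemma delta_seq_quadratic:
  "(delta_seq q k)\<^sup>2 * (1 + q + q * Aseq q k) = 2 * delta_seq q k + Aseq q k"
proof -
  have "delta_seq q k * (1 + q + q * Aseq q k) = 1 + sigma_seq q k"
    unfolding delta_seq_eq using delta_seq_denominator_pos[of k] by simp
  then have "(delta_seq q k)\<^sup>2 * (1 + q + q * Aseq q k) = delta_seq q k * (1 + sigma_seq q k)"
    by (simp add: power2_eq_square mult.assoc)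
  also have "\<dots> = 2 * delta_seq q k + delta_seq q k * (sigma_seq q k - 1)"
    by (simp add: algebra_simps)
  finally show ?thesis unfolding delta_sigma_seq .
qed

lemma one_minus_q_delta_seq_sq_pos: "0 < 1 - q * (delta_seq q k)\<^sup>2"
proof -
  have "Aseq q (Suc k) * (1 - q * (delta_seq q k)\<^sup>2) = (delta_seq q k)\<^sup>2"
    using delta_seq_sq[of k] by (simp add: algebra_simps)
  moreover have "0 < (delta_seq q k)\<^sup>2"
    using delta_seq_pos[of k] by simp
  ultimately show ?thesis
    using Aseq_Suc_pos[of k] by (metis zero_less_mult_pos)
qed

lemma one_plus_q_Aseq:
  "1 + q * Aseq q k = (1 - q * delta_seq q k)\<^sup>2 * (1 + q * Aseq q (Suc k))"
proof -
  define \<delta> A A' where "\<delta> = delta_seq q k" and "A = Aseq q k" and "A' = Aseq q (Suc k)"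
  define m where "m = 1 - q * \<delta>\<^sup>2"
  have "(1 + q * A') * m = 1"
    using delta_seq_sq[of k] unfolding m_def \<delta>_def A'_def by (simp add: algebra_simps)
  moreover have "(1 + q * A) * m = (1 - q * \<delta>)\<^sup>2 - q * (\<delta>\<^sup>2 * (1 + q + q * A) - (2 * \<delta> + A))"
    unfolding m_def by (simp add: power2_eq_square algebra_simps)
  ultimately have "(1 + q * A) * m = ((1 - q * \<delta>)\<^sup>2 * (1 + q * A')) * m"
    using delta_seq_quadratic[of k] unfolding \<delta>_def A_def by (simp add: mult.assoc)
  then show ?thesis
    using one_minus_q_delta_seq_sq_pos[of k] unfolding m_def \<delta>_def A_def A'_def by simp
qed

lemma delta_seq_Aseq_gap:
  "delta_seq q k * ((1 - q) * Aseq q (Suc k) - Aseq q k) = 2 * Aseq q (Suc k) * (1 - q * delta_seq q k)"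
proof -
  define \<delta> m where "\<delta> = delta_seq q k" and "m = 1 - q * \<delta>\<^sup>2"
  have A': "Aseq q (Suc k) * m = \<delta>\<^sup>2"
    using delta_seq_sq[of k] unfolding m_def \<delta>_def by (simp add: algebra_simps)
  have A: "Aseq q k * m = (1 + q) * \<delta>\<^sup>2 - 2 * \<delta>"
    using delta_seq_quadratic[of k] unfolding m_def \<delta>_def by (simp add: algebra_simps)
  have "m * (\<delta> * ((1 - q) * Aseq q (Suc k) - Aseq q k))
      = \<delta> * ((1 - q) * (Aseq q (Suc k) * m) - Aseq q k * m)"
    by (simp add: algebra_simps)
  also have "\<dots> = 2 * \<delta>\<^sup>2 * (1 - q * \<delta>)"
    unfolding A' A by (simp add: power2_eq_square algebra_simps)
  also have "\<dots> = m * (2 * Aseq q (Suc k) * (1 - q * \<delta>))"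
    unfolding A'[symmetric] by (simp add: algebra_simps)
  finally show ?thesis
    using one_minus_q_delta_seq_sq_pos[of k] unfolding m_def \<delta>_def by simp
qed

lemma beta_seq_Aseq: "beta_seq q k * ((1 - q) * Aseq q (Suc k)) = Aseq q k"
  unfolding beta_seq_def using Aseq_Suc_pos[of k] q_less_1 by simp

end

section \<open>One step as a weighted sum of inequalities\<close>

lemma I_f_shifted:
  fixes f :: "'a::real_inner \<Rightarrow> real" and gf :: "'a \<Rightarrow> 'a" and c x y :: 'a and \<mu> L :: real
  defines "H \<equiv> \<lambda>w. f w - f c - gf c \<bullet> (w - c) - \<mu> / 2 * (norm (w - c))\<^sup>2"
    and "U \<equiv> \<lambda>w. gf w - gf c - \<mu> *\<^sub>R (w - c)"
  shows "I_f \<mu> L f gf x y = H x - H y - U y \<bullet> (x - y) - 1 / (2 * (L - \<mu>)) * (norm (U x - U y))\<^sup>2"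
proof -
  have "U x - U y = gf x - gf y - \<mu> *\<^sub>R (x - y)"
    unfolding U_def by (simp add: algebra_simps)
  moreover have "H x - H y - U y \<bullet> (x - y) = f x - f y - gf y \<bullet> (x - y) - \<mu> / 2 * (norm (x - y))\<^sup>2"
    unfolding H_def U_def power2_norm_eq_inner
    by (simp add: inner_commute algebra_simps)
  ultimately show ?thesis unfolding I_f_def by simp
qed

lemma extrapolation_shifted:
  fixes gf :: "'a::real_inner \<Rightarrow> 'a"
  assumes L: "0 < L" and mu: "\<mu> = q * L" and beta: "\<beta> * ((1 - q) * A') = A"
    and y: "y = (1 - \<beta>) *\<^sub>R z + \<beta> *\<^sub>R (p - (1 / L) *\<^sub>R (gf p + s))"
  shows "((1 - q) * A') *\<^sub>R (y - xs) = ((1 - q) * A' - A) *\<^sub>R (z - xs)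
    + A *\<^sub>R ((1 - q) *\<^sub>R (p - xs) - (1 / L) *\<^sub>R ((gf p - gf xs - \<mu> *\<^sub>R (p - xs)) + (s + gf xs)))"
proof -
  have "y - xs = (1 - \<beta>) *\<^sub>R (z - xs) + \<beta> *\<^sub>R (p - (1 / L) *\<^sub>R (gf p + s) - xs)"
    unfolding y by (simp add: algebra_simps)
  moreover have "p - (1 / L) *\<^sub>R (gf p + s) - xs
      = (1 - q) *\<^sub>R (p - xs) - (1 / L) *\<^sub>R ((gf p - gf xs - \<mu> *\<^sub>R (p - xs)) + (s + gf xs))"
    unfolding mu using L by (simp add: algebra_simps)
  moreover have "(1 - q) * A' * (1 - \<beta>) = (1 - q) * A' - A" and "(1 - q) * A' * \<beta> = A"
    using beta by (simp_all add: algebra_simps)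
  ultimately show ?thesis
    by (simp add: scaleR_add_right)
qed

lemma I_f_weighted_sum:
  fixes f :: "'a::real_inner \<Rightarrow> real" and gf :: "'a \<Rightarrow> 'a" and xs z p y s :: 'a
  assumes L: "0 < L" and q: "q < 1" and mu: "\<mu> = q * L" and beta: "\<beta> * ((1 - q) * A') = A"
    and y: "y = (1 - \<beta>) *\<^sub>R z + \<beta> *\<^sub>R (p - (1 / L) *\<^sub>R (gf p + s))"
  defines "u \<equiv> gf y - gf xs - \<mu> *\<^sub>R (y - xs)"
  shows "(1 - q) * A * I_f \<mu> L f gf p xs
      - ((1 - q) * (A' - A) * I_f \<mu> L f gf xs y + (1 - q) * A * I_f \<mu> L f gf p y
         + (1 - q) * A' * I_f \<mu> L f gf y xs)
    = A / L * (u \<bullet> (s + gf xs)) + A' / L * (u \<bullet> u) - ((1 - q) * A' - A) * (u \<bullet> (z - xs))"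
proof -
  define H where "H w = f w - f xs - gf xs \<bullet> (w - xs) - \<mu> / 2 * (norm (w - xs))\<^sup>2" for w
  define U where "U w = gf w - gf xs - \<mu> *\<^sub>R (w - xs)" for w
  define c where "c = 1 / (2 * (L - \<mu>))"
  have shifted: "I_f \<mu> L f gf a b = H a - H b - U b \<bullet> (a - b) - c * (norm (U a - U b))\<^sup>2" for a b
    unfolding H_def U_def c_def by (rule I_f_shifted)
  have "H xs = 0" "U xs = 0"
    unfolding H_def U_def by simp_all
  then have I_f_shifted_xs: "I_f \<mu> L f gf p xs = H p - c * (norm (U p))\<^sup>2"
      "I_f \<mu> L f gf xs y = - H y + U y \<bullet> (y - xs) - c * (norm (U y))\<^sup>2"
      "I_f \<mu> L f gf p y = H p - H y - U y \<bullet> ((p - xs) - (y - xs)) - c * (norm (U p - U y))\<^sup>2"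
      "I_f \<mu> L f gf y xs = H y - c * (norm (U y))\<^sup>2"
    unfolding shifted by (simp_all add: inner_diff_right norm_minus_commute)
  have "(1 - q) * A * I_f \<mu> L f gf p xs
      - ((1 - q) * (A' - A) * I_f \<mu> L f gf xs y + (1 - q) * A * I_f \<mu> L f gf p y
         + (1 - q) * A' * I_f \<mu> L f gf y xs)
    = (1 - q) * A * (U y \<bullet> (p - xs)) - (1 - q) * A' * (U y \<bullet> (y - xs))
      - 2 * ((1 - q) * c) * A * (U y \<bullet> U p) + 2 * ((1 - q) * c) * A' * (U y \<bullet> U y)"
    unfolding I_f_shifted_xs power2_norm_eq_inner by (simp add: inner_commute algebra_simps)
  moreover have "(1 - q) * c = 1 / (2 * L)"
    unfolding c_def mu using L q by (simp add: field_simps)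
  moreover note extrapolation_shifted[where gf = gf and p = p and s = s and xs = xs, OF L mu beta y,
      folded U_def]
  from arg_cong[where f = "\<lambda>w. U y \<bullet> w", OF this]
  have "(1 - q) * A' * (U y \<bullet> (y - xs)) = ((1 - q) * A' - A) * (U y \<bullet> (z - xs))
      + (1 - q) * A * (U y \<bullet> (p - xs)) - A / L * (U y \<bullet> U p) - A / L * (U y \<bullet> (s + gf xs))"
    by (simp add: algebra_simps)
  ultimately show ?thesis
    unfolding u_def U_def[symmetric] by simp
qed

lemma quadratic_remainder_eq_0:
  fixes Z Z1 w :: "'a::real_inner"
  assumes \<delta>: "0 < \<delta>" and L: "0 < L"
    and delta_sq: "\<delta>\<^sup>2 * (1 + q * A') = A'"
    and one_plus_qA: "1 + q * A = (1 - q * \<delta>)\<^sup>2 * (1 + q * A')"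
    and w: "w = (L / \<delta>) *\<^sub>R ((1 - q * \<delta>) *\<^sub>R Z - Z1)"
  shows "A' / L * (w \<bullet> w) - 2 * A' * (1 - q * \<delta>) / \<delta> * (w \<bullet> Z)
      + L * (1 + q * A) * (norm Z)\<^sup>2 - L * (1 + q * A') * (norm Z1)\<^sup>2 = 0"
proof -
  define K e where "K = 1 + q * A'" and "e = 1 - q * \<delta>"
  define W where "W = e *\<^sub>R Z - Z1"
  have A'_K: "A' = \<delta>\<^sup>2 * K"
    using delta_sq unfolding K_def by simp
  have "A' / L * (w \<bullet> w) = L * K * (W \<bullet> W)"
    unfolding w W_def e_def A'_K using L \<delta> by (simp add: power2_eq_square)
  moreover have "2 * A' * e / \<delta> * (w \<bullet> Z) = 2 * L * K * e * (W \<bullet> Z)"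
    unfolding w W_def e_def A'_K using L \<delta> by (simp add: power2_eq_square)
  moreover have "L * (1 + q * A) * (norm Z)\<^sup>2 = L * K * e\<^sup>2 * (Z \<bullet> Z)"
    unfolding one_plus_qA K_def e_def power2_norm_eq_inner by (simp add: ac_simps)
  moreover have "L * (1 + q * A') * (norm Z1)\<^sup>2 = L * K * (Z1 \<bullet> Z1)"
    unfolding K_def power2_norm_eq_inner by simp
  moreover have "L * K * (W \<bullet> W) - 2 * L * K * e * (W \<bullet> Z) + L * K * e\<^sup>2 * (Z \<bullet> Z) - L * K * (Z1 \<bullet> Z1)
      = L * K * (W \<bullet> W - 2 * e * (W \<bullet> Z) - Z1 \<bullet> Z1 + e\<^sup>2 * (Z \<bullet> Z))"
    by (simp add: algebra_simps)
  moreover have "W \<bullet> W - 2 * e * (W \<bullet> Z) - Z1 \<bullet> Z1 + e\<^sup>2 * (Z \<bullet> Z) = 0"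
    unfolding W_def by (simp add: inner_commute power2_eq_square algebra_simps)
  ultimately show ?thesis
    unfolding e_def by (simp only: mult_zero_right)
qed

lemma quadratic_terms_identity:
  fixes Z Z1 b u v :: "'a::real_inner"
  assumes \<delta>: "0 < \<delta>" and L: "0 < L"
    and delta_sq: "\<delta>\<^sup>2 * (1 + q * A') = A'"
    and delta_gap: "\<delta> * ((1 - q) * A' - A) = 2 * A' * (1 - q * \<delta>)"
    and one_plus_qA: "1 + q * A = (1 - q * \<delta>)\<^sup>2 * (1 + q * A')"
    and uv: "u + v = (L / \<delta>) *\<^sub>R ((1 - q * \<delta>) *\<^sub>R Z - Z1)"
  shows "A / L * (u \<bullet> b) + A' / L * (u \<bullet> u) - ((1 - q) * A' - A) * (u \<bullet> Z)
      + q * A * (b \<bullet> Z) + A / \<delta> * (b \<bullet> (Z1 - Z)) - 2 * A' / \<delta> * (v \<bullet> Z1)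
      + A / (2 * L) * (norm b)\<^sup>2 + L * (1 + q * A) * (norm Z)\<^sup>2 - L * (1 + q * A') * (norm Z1)\<^sup>2
    = A / (2 * L) * (norm (b - v))\<^sup>2 + (2 * A' - A) / (2 * L) * (norm v)\<^sup>2"
proof -
  define e where "e = 1 - q * \<delta>"
  define W where "W = e *\<^sub>R Z - Z1"
  define C where "C = (1 - q) * A' - A"
  have uvW: "u + v = (L / \<delta>) *\<^sub>R W"
    using uv unfolding W_def e_def .
  have C_eq: "C = 2 * A' * e / \<delta>"
    using delta_gap \<delta> unfolding C_def e_def by (simp add: field_simps)
  have b_terms: "A / L * (u \<bullet> b) + q * A * (b \<bullet> Z) + A / \<delta> * (b \<bullet> (Z1 - Z))
      + A / (2 * L) * (norm b)\<^sup>2 - A / (2 * L) * (norm (b - v))\<^sup>2 = - (A / (2 * L) * (v \<bullet> v))"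
  proof -
    define r s where "r = A / L" and "s = A / \<delta>"
    have A_eq: "A = s * \<delta>" and half: "A / (2 * L) = r / 2"
      using \<delta> unfolding r_def s_def by simp_all
    have "r * ((u + v) \<bullet> b) = s * (W \<bullet> b)"
      unfolding uvW r_def s_def using L by simp
    then show ?thesis
      unfolding half r_def[symmetric] s_def[symmetric] W_def e_def power2_norm_eq_inner
      unfolding A_eq by (simp add: inner_commute algebra_simps)
  qed
  have v_terms: "A' / L * (u \<bullet> u) - 2 * A' / \<delta> * (v \<bullet> Z1) - C * (u \<bullet> Z)
      = A' / L * (v \<bullet> v) + A' / L * ((u + v) \<bullet> (u + v)) - C * ((u + v) \<bullet> Z)"
  proof -
    define r s where "r = A' / L" and "s = A' / \<delta>"
    have C_s: "C = 2 * s * e" and two_s: "2 * A' / \<delta> = 2 * s"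
      unfolding C_eq s_def by simp_all
    have "r * (v \<bullet> (u + v)) = s * (v \<bullet> W)"
      unfolding uvW r_def s_def using L by simp
    then show ?thesis
      unfolding r_def[symmetric] C_s two_s W_def
      by (simp add: inner_commute algebra_simps)
  qed
  have "A' / L * ((u + v) \<bullet> (u + v)) - C * ((u + v) \<bullet> Z)
      + L * (1 + q * A) * (norm Z)\<^sup>2 - L * (1 + q * A') * (norm Z1)\<^sup>2 = 0"
    using quadratic_remainder_eq_0[OF \<delta> L delta_sq one_plus_qA uv] unfolding C_eq e_def .
  moreover have "(2 * A' - A) / (2 * L) * (norm v)\<^sup>2 = A' / L * (v \<bullet> v) - A / (2 * L) * (v \<bullet> v)"
    using L by (simp add: power2_norm_eq_inner field_simps)
  ultimately show ?thesis
    using b_terms v_terms unfolding C_def by linarith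
qed

lemma prox_item_step_identity:
  fixes f :: "'a::real_inner \<Rightarrow> real" and gf :: "'a \<Rightarrow> 'a" and G :: "'a \<Rightarrow> real"
    and xs z0 z1 p y s s1 :: 'a
  assumes L: "0 < L" and q: "q < 1" and mu: "\<mu> = q * L" and \<delta>: "0 < \<delta>"
    and delta_sq: "\<delta>\<^sup>2 * (1 + q * A') = A'"
    and delta_gap: "\<delta> * ((1 - q) * A' - A) = 2 * A' * (1 - q * \<delta>)"
    and one_plus_qA: "1 + q * A = (1 - q * \<delta>)\<^sup>2 * (1 + q * A')"
    and delta_sigma: "\<delta> * (\<sigma> - 1) = A"
    and beta: "\<beta> * ((1 - q) * A') = A"
    and y: "y = (1 - \<beta>) *\<^sub>R z0 + \<beta> *\<^sub>R (p - (1 / L) *\<^sub>R (gf p + s))"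
    and z1: "z1 = (1 - q * \<delta>) *\<^sub>R z0 + (q * \<delta>) *\<^sub>R y - (\<delta> / L) *\<^sub>R (gf y + s1)"
  shows "(1 - q) * A * I_f \<mu> L f gf p xs + q * A * linearization_gap G xs z0 s
      + (q * A + 1 - \<sigma>) * linearization_gap G z0 xs (- gf xs)
      + A / (2 * L) * (norm (s - - gf xs))\<^sup>2 + (L + \<mu> * A) * (norm (z0 - xs))\<^sup>2
      - (L + \<mu> * A') * (norm (z1 - xs))\<^sup>2
    = (1 - q) * (A' - A) * I_f \<mu> L f gf xs y + (1 - q) * A * I_f \<mu> L f gf p y
      + (1 - q) * A' * I_f \<mu> L f gf y xs
      + (\<sigma> - 1) * linearization_gap G z1 z0 s + 2 * A' / \<delta> * linearization_gap G xs z1 s1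
      + (2 * A' - A) / \<delta> * linearization_gap G z1 xs (- gf xs)
      + A / (2 * L) * (norm (s - s1))\<^sup>2 + (2 * A' - A) / (2 * L) * (norm (s1 - - gf xs))\<^sup>2"
proof -
  define Z Z1 b v where "Z = z0 - xs" and "Z1 = z1 - xs" and "b = s + gf xs" and "v = s1 + gf xs"
  define u where "u = gf y - gf xs - \<mu> *\<^sub>R (y - xs)"
  have f_part: "(1 - q) * A * I_f \<mu> L f gf p xs - ((1 - q) * (A' - A) * I_f \<mu> L f gf xs y
      + (1 - q) * A * I_f \<mu> L f gf p y + (1 - q) * A' * I_f \<mu> L f gf y xs)
    = A / L * (u \<bullet> b) + A' / L * (u \<bullet> u) - ((1 - q) * A' - A) * (u \<bullet> Z)"
    unfolding u_def b_def Z_def by (rule I_f_weighted_sum[where gf = gf and p = p and s = s and z = z0, OF L q mu beta y])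
  have g_part: "q * A * linearization_gap G xs z0 s + (q * A + 1 - \<sigma>) * linearization_gap G z0 xs (- gf xs)
      - ((\<sigma> - 1) * linearization_gap G z1 z0 s + 2 * A' / \<delta> * linearization_gap G xs z1 s1
         + (2 * A' - A) / \<delta> * linearization_gap G z1 xs (- gf xs))
    = q * A * (b \<bullet> Z) + A / \<delta> * (b \<bullet> (Z1 - Z)) - 2 * A' / \<delta> * (v \<bullet> Z1)"
  proof -
    define a a' where "a = A / \<delta>" and "a' = A' / \<delta>"
    have coeffs: "\<sigma> = 1 + a" "2 * A' / \<delta> = 2 * a'" "(2 * A' - A) / \<delta> = 2 * a' - a"
      using delta_sigma \<delta> unfolding a_def a'_def by (auto simp: field_simps)
    show ?thesis
      unfolding coeffs a_def[symmetric] linearization_gap_def b_def v_def Z_def Z1_def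
      by (simp add: inner_commute algebra_simps)
  qed
  have "u + v = (L / \<delta>) *\<^sub>R ((\<delta> / L) *\<^sub>R (u + v))"
    using L \<delta> by simp
  also have "(\<delta> / L) *\<^sub>R (u + v) = (1 - q * \<delta>) *\<^sub>R Z - Z1"
    unfolding u_def v_def Z_def Z1_def z1 mu using L by (simp add: algebra_simps)
  finally have "u + v = (L / \<delta>) *\<^sub>R ((1 - q * \<delta>) *\<^sub>R Z - Z1)" .
  note quadratic_part = quadratic_terms_identity[OF \<delta> L delta_sq delta_gap one_plus_qA this, of b]
  have "s - - gf xs = b" "s1 - - gf xs = v" "s - s1 = b - v" "z0 - xs = Z" "z1 - xs = Z1"
    and "L + \<mu> * A = L * (1 + q * A)" "L + \<mu> * A' = L * (1 + q * A')"
    unfolding b_def v_def Z_def Z1_def mu by (simp_all add: algebra_simps)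
  then show ?thesis
    using f_part g_part quadratic_part by simp
qed

section \<open>The Prox-ITEM iterates\<close>

locale prox_item =
  fixes f :: "'a::real_inner \<Rightarrow> real" and gf :: "'a \<Rightarrow> 'a" and g :: "'a \<Rightarrow> ereal"
    and \<mu> L q :: real and x y z zbar :: "nat \<Rightarrow> 'a" and xs :: 'a
  assumes mu_pos: "0 < \<mu>" and mu_less_L: "\<mu> < L"
    and f_strongly_convex: "strongly_convex \<mu> f" and f_smooth: "L_smooth L f gf"
    and g_convex: "convex_fun g" and g_proper: "proper_fun g"
    and q_def: "q = \<mu> / L"
    and xs_min: "\<And>w. ereal (f xs) + g xs \<le> ereal (f w) + g w"
    and y_def: "\<And>k. y k = (1 - beta_seq q k) *\<^sub>R z k + beta_seq q k *\<^sub>R x k"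
    and zbar_def: "\<And>k. zbar (Suc k) = (1 - q * delta_seq q k) *\<^sub>R z k + (q * delta_seq q k) *\<^sub>R y k
      - (delta_seq q k / L) *\<^sub>R gf (y k)"
    and z_prox: "\<And>k. is_prox g (delta_seq q k / L) (zbar (Suc k)) (z (Suc k))"
    and x_def: "\<And>k. x (Suc k) = y k - (1 / L) *\<^sub>R gf (y k)
      - (1 / delta_seq q k) *\<^sub>R (zbar (Suc k) - z (Suc k))"
begin

abbreviation sg :: "nat \<Rightarrow> 'a" where
  "sg \<equiv> s_g q L zbar z"

abbreviation g_real :: "'a \<Rightarrow> real" where
  "g_real w \<equiv> real_of_ereal (g w)"

lemma L_pos: "0 < L"
  using mu_pos mu_less_L by linarith

lemma q_nonneg: "0 \<le> q" and q_less_1: "q < 1" and mu_eq: "\<mu> = q * L"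
  using mu_pos mu_less_L L_pos unfolding q_def by simp_all

lemma s_g_Suc: "sg (Suc k) = (L / delta_seq q k) *\<^sub>R (zbar (Suc k) - z (Suc k))"
  unfolding s_g_def by simp

lemma z_Suc_eq: "z (Suc k) = (1 - q * delta_seq q k) *\<^sub>R z k + (q * delta_seq q k) *\<^sub>R y k
    - (delta_seq q k / L) *\<^sub>R (gf (y k) + sg (Suc k))"
proof -
  have "(delta_seq q k / L) *\<^sub>R sg (Suc k) = zbar (Suc k) - z (Suc k)"
    unfolding s_g_Suc using delta_seq_pos[OF q_nonneg q_less_1, of k] L_pos by simp
  then have "z (Suc k) = zbar (Suc k) - (delta_seq q k / L) *\<^sub>R sg (Suc k)"
    by simp
  also have "\<dots> = (1 - q * delta_seq q k) *\<^sub>R z k + (q * delta_seq q k) *\<^sub>R y k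
      - (delta_seq q k / L) *\<^sub>R (gf (y k) + sg (Suc k))"
    unfolding zbar_def by (simp add: algebra_simps)
  finally show ?thesis .
qed

lemma y_eq: "y k = (1 - beta_seq q k) *\<^sub>R z k
    + beta_seq q k *\<^sub>R (y (k - 1) - (1 / L) *\<^sub>R (gf (y (k - 1)) + sg k))"
proof (cases k)
  case 0
  then show ?thesis unfolding y_def beta_seq_def by simp
next
  case (Suc j)
  have "(1 / delta_seq q j) *\<^sub>R (zbar k - z k) = (1 / L) *\<^sub>R sg k"
    unfolding Suc s_g_Suc using L_pos by simp
  then have "x k = y (k - 1) - (1 / L) *\<^sub>R (gf (y (k - 1)) + sg k)"
    unfolding Suc x_def by (simp add: algebra_simps)
  then show ?thesis unfolding y_def by simp
qed

lemma is_subgradient_z_Suc: "is_subgradient g (z (Suc k)) (sg (Suc k))"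
proof -
  have "0 < delta_seq q k / L"
    using delta_seq_pos[OF q_nonneg q_less_1, of k] L_pos by simp
  from is_subgradient_prox[OF g_convex g_proper this z_prox]
  show ?thesis unfolding s_g_Suc by simp
qed

lemma is_subgradient_xs: "is_subgradient g xs (- gf xs)"
  using is_subgradient_at_minimizer_of_sum[OF g_convex g_proper f_smooth xs_min] .

text \<open>For \<open>k = 0\<close> the point \<open>z 0\<close> need not lie in the domain of \<open>g\<close>, so the \<open>I_g\<close> terms of
  \<open>V_seq\<close> may be infinite; they carry the weights \<open>A\<^sub>0 = 0\<close> and \<open>1 - \<sigma>\<^sub>0 = 0\<close>, and
  \<open>0 * \<infinity> = 0\<close> in \<open>ereal\<close>.\<close>

lemma V_seq_eq:
  "V_seq \<mu> L f gf g y z zbar xs k = ereal ((1 - q) * Aseq q k * I_f \<mu> L f gf (y (k - 1)) xs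
    + q * Aseq q k * linearization_gap g_real xs (z k) (sg k)
    + (q * Aseq q k + 1 - sigma_seq q k)
      * linearization_gap g_real (z k) xs (- gf xs)
    + Aseq q k / (2 * L) * (norm (sg k - - gf xs))\<^sup>2
    + (L + \<mu> * Aseq q k) * (norm (z k - xs))\<^sup>2)"
proof -
  have "\<bar>g xs\<bar> \<noteq> \<infinity>"
    using is_subgradient_xs unfolding is_subgradient_def by simp
  moreover have "k = 0 \<or> \<bar>g (z k)\<bar> \<noteq> \<infinity>"
    using is_subgradient_z_Suc unfolding is_subgradient_def by (cases k) auto
  moreover have "Aseq q k = 0 \<and> sigma_seq q k = 1" if "k = 0"
    using that unfolding sigma_seq_def by simp
  ultimately have "ereal (q * Aseq q k) * I_g g xs (z k) (sg k)
      = ereal (q * Aseq q k * linearization_gap g_real xs (z k) (sg k))"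
    and "ereal (q * Aseq q k + 1 - sigma_seq q k) * I_g g (z k) xs (- gf xs)
      = ereal ((q * Aseq q k + 1 - sigma_seq q k)
          * linearization_gap g_real (z k) xs (- gf xs))"
    by (auto simp: I_g_eq_linearization_gap zero_ereal_def[symmetric])
  then show ?thesis
    unfolding V_seq_def Let_def q_def[symmetric] by simp
qed

lemma linearization_gaps_nonneg:
  "0 \<le> linearization_gap g_real xs (z (Suc k)) (sg (Suc k))"
  "0 \<le> linearization_gap g_real (z (Suc k)) xs (- gf xs)"
  "0 \<le> (sigma_seq q k - 1) * linearization_gap g_real (z (Suc k)) (z k) (sg k)"
proof -
  have fin: "\<bar>g xs\<bar> \<noteq> \<infinity>" "\<bar>g (z (Suc k))\<bar> \<noteq> \<infinity>"
    using is_subgradient_xs is_subgradient_z_Suc[of k] unfolding is_subgradient_def by simp_all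
  then show "0 \<le> linearization_gap g_real xs (z (Suc k)) (sg (Suc k))"
    and "0 \<le> linearization_gap g_real (z (Suc k)) xs (- gf xs)"
    using is_subgradient_xs is_subgradient_z_Suc[of k] by (simp_all add: linearization_gap_nonneg)
  show "0 \<le> (sigma_seq q k - 1) * linearization_gap g_real (z (Suc k)) (z k) (sg k)"
  proof (cases k)
    case 0
    then show ?thesis unfolding sigma_seq_def by simp
  next
    case (Suc j)
    then have "0 \<le> linearization_gap g_real (z (Suc k)) (z k) (sg k)"
      using is_subgradient_z_Suc[of j] fin by (simp add: linearization_gap_nonneg)
    then show ?thesis
      using sigma_seq_ge_1[OF q_nonneg q_less_1, of k] by simp
  qed
qed

lemma norm_z_Suc_le_V_seq:
  "ereal ((L + \<mu> * Aseq q (Suc k)) * (norm (z (Suc k) - xs))\<^sup>2) \<le> V_seq \<mu> L f gf g y z zbar xs k"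
proof -
  note scalars = q_nonneg q_less_1
  define A A' \<sigma> \<delta> where "A = Aseq q k" and "A' = Aseq q (Suc k)"
    and "\<sigma> = sigma_seq q k" and "\<delta> = delta_seq q k"
  have "0 \<le> A" "A \<le> A'" "0 < \<delta>"
    unfolding A_def A'_def \<delta>_def
    using Aseq_nonneg[OF scalars] Aseq_le_Suc[OF scalars] delta_seq_pos[OF scalars] by auto
  then have "0 \<le> (1 - q) * (A' - A) * I_f \<mu> L f gf xs (y k) + (1 - q) * A * I_f \<mu> L f gf (y (k - 1)) (y k)
      + (1 - q) * A' * I_f \<mu> L f gf (y k) xs
      + (\<sigma> - 1) * linearization_gap g_real (z (Suc k)) (z k) (sg k)
      + 2 * A' / \<delta> * linearization_gap g_real xs (z (Suc k)) (sg (Suc k))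
      + (2 * A' - A) / \<delta> * linearization_gap g_real (z (Suc k)) xs (- gf xs)
      + A / (2 * L) * (norm (sg k - sg (Suc k)))\<^sup>2 + (2 * A' - A) / (2 * L) * (norm (sg (Suc k) - - gf xs))\<^sup>2"
    using q_less_1 L_pos linearization_gaps_nonneg[of k]
      I_f_nonneg[OF f_strongly_convex f_smooth mu_less_L] unfolding \<sigma>_def
    by (intro add_nonneg_nonneg) (auto intro: mult_nonneg_nonneg)
  also have "\<dots> = (1 - q) * A * I_f \<mu> L f gf (y (k - 1)) xs + q * A * linearization_gap g_real xs (z k) (sg k)
      + (q * A + 1 - \<sigma>) * linearization_gap g_real (z k) xs (- gf xs)
      + A / (2 * L) * (norm (sg k - - gf xs))\<^sup>2 + (L + \<mu> * A) * (norm (z k - xs))\<^sup>2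
      - (L + \<mu> * A') * (norm (z (Suc k) - xs))\<^sup>2"
    unfolding A_def A'_def \<sigma>_def \<delta>_def
    by (rule prox_item_step_identity[OF L_pos q_less_1 mu_eq delta_seq_pos[OF scalars, of k]
        delta_seq_sq[OF scalars, of k] delta_seq_Aseq_gap[OF scalars, of k] one_plus_q_Aseq[OF scalars, of k]
        delta_sigma_seq[OF scalars, of k] beta_seq_Aseq[OF scalars, of k] y_eq[of k] z_Suc_eq[of k],
        symmetric])
  finally show ?thesis
    unfolding V_seq_eq A_def A'_def \<sigma>_def by simp
qed

end

theorem lemma3:
  fixes f :: "'a::{real_inner, complete_space} \<Rightarrow> real"
    and gf :: "'a \<Rightarrow> 'a"
    and g :: "'a \<Rightarrow> ereal"
    and \<mu> L q :: real
    and x y z zbar :: "nat \<Rightarrow> 'a"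
    and xs :: 'a
  assumes mu_pos: "0 < \<mu>" and mu_L: "\<mu> < L"
    and f_sc: "strongly_convex \<mu> f"
    and f_smooth: "L_smooth L f gf"
    and g_convex: "convex_fun g" and g_proper: "proper_fun g" and g_lsc: "lsc_fun g"
    and q_def: "q = \<mu> / L"
    and xs_min: "\<forall>w. ereal (f xs) + g xs \<le> ereal (f w) + g w"
    and z0: "z 0 = x 0"
    and y_def: "\<forall>k. y k = (1 - beta_seq q k) *\<^sub>R z k + beta_seq q k *\<^sub>R x k"
    and zbar_def: "\<forall>k. zbar (Suc k) = (1 - q * delta_seq q k) *\<^sub>R z k + (q * delta_seq q k) *\<^sub>R y k
                          - (delta_seq q k / L) *\<^sub>R gf (y k)"
    and z_prox: "\<forall>k. is_prox g (delta_seq q k / L) (zbar (Suc k)) (z (Suc k))"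
    and x_def: "\<forall>k. x (Suc k) = y k - (1 / L) *\<^sub>R gf (y k)
                          - (1 / delta_seq q k) *\<^sub>R (zbar (Suc k) - z (Suc k))"
  shows "ereal ((L + \<mu> * Aseq q (Suc k)) * (norm (z (Suc k) - xs))\<^sup>2)
           \<le> V_seq \<mu> L f gf g y z zbar xs k"
proof -
  interpret prox_item f gf g \<mu> L q x y z zbar xs
    by (rule prox_item.intro)
      (use mu_pos mu_L f_sc f_smooth g_convex g_proper q_def xs_min y_def zbar_def z_prox x_def in auto)
  show ?thesis
    by (rule norm_z_Suc_le_V_seq)
qed

end
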